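(* Fix $V$ and $k\ge1$. For densities $\rho\in\{n/V: n=0,1,2,\dots\}$, the canonical expectation $\rho\mapsto\langle\exp(-\lambda N_k)\rangle^{C}_V(\rho)$ is a monotonically decreasing function of $\rho$ for every $\lambda>0$, and for every integer $r\ge1$ the moment $\rho\mapsto\langle N_k^r\rangle^{C}_V(\rho)$ is a monotonically increasing function of $\rho$.
   Context: Fix exponents $\alpha_1\ge\alpha_2\ge\alpha_3>0$ with $\alpha_1+\alpha_2+\alpha_3=1$ and let $\Lambda_V=\{x\in\mathbb{R}^3:0\le x_j\le V^{\alpha_j}\}$. The one-particle Hamiltonian $t_V$ is $-\Delta/2$ on $L^2(\Lambda_V)$ with Dirichlet boundary conditions, with eigenvalues $E_1(V)<E_2(V)\le\dots$ (these are $\frac{\pi^2}{2}\sum_j n_j^2V^{-2\alpha_j}$, $n_j\ge1$). For the perfect Bose gas at inverse temperature $\beta>0$, $T_V^{(n)}$ is the $n$-particle free Hamiltonian (generated by $t_V$) on the symmetric $n$-particle space, $Z_V(n)=\mathrm{Tr}\,e^{-\beta T_V^{(n)}}$ ($Z_V(0)=1$), and the canonical state at density $\rho=n/V$ is $\langle\cdot\rangle^C_V(\rho)=Z_V(n)^{-1}\mathrm{Tr}(\cdot\,e^{-\beta T_V^{(n)}})$. $N_k$ is the occupation number of the $k$-th one-particle eigenstate (a commuting family, treated as random variables). *)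

theory Defs
  imports "HOL-Analysis.Analysis" "HOL-Library.Multiset"
begin

type_synonym state = "nat \<times> nat \<times> nat"

text \<open>Dirichlet eigenvalue of -Delta/2 on the box with sides V powr a1, V powr a2, V powr a3,
  for the eigenfunction labelled by (n1,n2,n3), n_j \<ge> 1.\<close>
definition eig :: "real \<Rightarrow> real \<Rightarrow> real \<Rightarrow> real \<Rightarrow> state \<Rightarrow> real" where
  "eig V a1 a2 a3 q = (case q of (n1, n2, n3) \<Rightarrow>
     pi\<^sup>2 / 2 * (real n1 ^ 2 * V powr (-2 * a1) + real n2 ^ 2 * V powr (-2 * a2)
                 + real n3 ^ 2 * V powr (-2 * a3)))"

definition states :: "state set" where
  "states = {(n1, n2, n3). 1 \<le> n1 \<and> 1 \<le> n2 \<and> 1 \<le> n3}"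

definition eig_enum :: "real \<Rightarrow> real \<Rightarrow> real \<Rightarrow> real \<Rightarrow> (nat \<Rightarrow> state) \<Rightarrow> bool" where
  "eig_enum V a1 a2 a3 e \<longleftrightarrow> bij_betw e {1..} states \<and>
     (\<forall>i j. 1 \<le> i \<longrightarrow> i \<le> j \<longrightarrow> eig V a1 a2 a3 (e i) \<le> eig V a1 a2 a3 (e j))"

text \<open>Orthonormal basis of the symmetric n-particle space: occupation configurations,
  i.e. multisets of n one-particle states; N_q = count M q.\<close>
definition configs :: "nat \<Rightarrow> state multiset set" where
  "configs n = {M. size M = n \<and> set_mset M \<subseteq> states}"

definition boltz :: "real \<Rightarrow> real \<Rightarrow> real \<Rightarrow> real \<Rightarrow> real \<Rightarrow> state multiset \<Rightarrow> real" where
  "boltz beta V a1 a2 a3 M = exp (- beta * sum_mset (image_mset (eig V a1 a2 a3) M))"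

definition Zcan :: "real \<Rightarrow> real \<Rightarrow> real \<Rightarrow> real \<Rightarrow> real \<Rightarrow> nat \<Rightarrow> real" where
  "Zcan beta V a1 a2 a3 n = (\<Sum>\<^sub>\<infinity>M\<in>configs n. boltz beta V a1 a2 a3 M)"

definition cexp :: "real \<Rightarrow> real \<Rightarrow> real \<Rightarrow> real \<Rightarrow> real \<Rightarrow> (nat \<Rightarrow> real) \<Rightarrow> state \<Rightarrow> nat \<Rightarrow> real" where
  "cexp beta V a1 a2 a3 f q n =
     (\<Sum>\<^sub>\<infinity>M\<in>configs n. f (count M q) * boltz beta V a1 a2 a3 M) / Zcan beta V a1 a2 a3 n"

end

(*
  Let P_n(N_q >= j) be the canonical probability that the one-particle state q carries at least
  j of the n particles. Removing j copies of q from a configuration gives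
  P_n(N_q >= j) = exp(-beta j E_q) Z(n - j) / Z(n). The partition function is log-concave,
  Z(n) Z(n + 2) <= Z(n + 1)^2: list the states of an n-particle and an (n + 2)-particle
  configuration in increasing order and exchange the tails of the two lists just after the first
  position where the longer list catches up with the shorter one. This is an injection into pairs
  of (n + 1)-particle configurations that preserves the total energy. Hence Z(n - j) / Z(n) and
  with it every tail probability increase with n, and writing
  f(N_q) = f(0) + sum_{j >= 1} (f(j) - f(j - 1)) [N_q >= j] shows that the canonical expectation
  of f(N_q) is nondecreasing in n for nondecreasing f and nonincreasing for nonincreasing f.
  Nothing about the box enters beyond the summability of the one-particle Boltzmann weights.
*)

theory Submission
  imports Defs
begin

section \<open>Exchanging the tails of two sorted lists\<close>

lemma sorted_take_le_nth:
  assumes "sorted xs" "u \<in> set (take k xs)" "j < length xs" "k \<le> Suc j"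
  shows "u \<le> xs ! j"
proof -
  obtain p where "p < length (take k xs)" "u = take k xs ! p"
    using assms(2) by (auto simp: in_set_conv_nth)
  then show ?thesis
    using assms by (auto intro: sorted_nth_mono)
qed

lemma sorted_nth_le_drop:
  assumes "sorted xs" "v \<in> set (drop k xs)" "j \<le> k"
  shows "xs ! j \<le> v"
proof -
  obtain p where "p < length (drop k xs)" "v = drop k xs ! p"
    using assms(2) by (auto simp: in_set_conv_nth)
  then show ?thesis
    using assms by (auto intro: sorted_nth_mono)
qed

definition first_crossing :: "nat \<Rightarrow> 'a::linorder list \<Rightarrow> 'a list \<Rightarrow> nat" where
  "first_crossing n xs ys = (LEAST i. i = n \<or> ys ! i \<le> xs ! i)"

definition crossing_swap :: "nat \<Rightarrow> 'a::linorder list \<Rightarrow> 'a list \<Rightarrow> 'a list \<times> 'a list" where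
  "crossing_swap n xs ys = (let i = first_crossing n xs ys in
     (take i xs @ drop (Suc i) ys, take (Suc i) ys @ drop i xs))"

lemma first_crossing_le: "first_crossing n xs ys \<le> n"
  unfolding first_crossing_def by (rule Least_le) simp

lemma less_first_crossing: "j < first_crossing n xs ys \<Longrightarrow> xs ! j < ys ! j"
  unfolding first_crossing_def using not_less_Least by fastforce

lemma first_crossing_crosses:
  "first_crossing n xs ys < n \<Longrightarrow> ys ! first_crossing n xs ys \<le> xs ! first_crossing n xs ys"
  unfolding first_crossing_def by (metis (mono_tags, lifting) LeastI less_irrefl)

lemma first_crossing_eqI:
  assumes "i \<le> n" "\<And>j. j < i \<Longrightarrow> xs ! j < ys ! j" "i < n \<Longrightarrow> ys ! i \<le> xs ! i"
  shows "first_crossing n xs ys = i"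
  unfolding first_crossing_def
proof (rule Least_equality)
  show "i = n \<or> ys ! i \<le> xs ! i"
    using assms(1,3) by linarith
  show "i \<le> j" if "j = n \<or> ys ! j \<le> xs ! j" for j
    using that assms(1,2) by (metis leD le_less_linear)
qed

lemma crossing_swap_mset:
  "mset (fst (crossing_swap n xs ys)) + mset (snd (crossing_swap n xs ys)) = mset xs + mset ys"
proof -
  define i where "i = first_crossing n xs ys"
  have "mset (fst (crossing_swap n xs ys)) + mset (snd (crossing_swap n xs ys))
      = (mset (take i xs) + mset (drop i xs)) + (mset (take (Suc i) ys) + mset (drop (Suc i) ys))"
    by (simp add: crossing_swap_def i_def[symmetric] Let_def algebra_simps)
  also have "\<dots> = mset xs + mset ys"
    by (metis append_take_drop_id mset_append)
  finally show ?thesis .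
qed

context
  fixes xs ys :: "'a::linorder list" and n :: nat
  assumes xs_sorted: "sorted xs" and ys_sorted: "sorted ys"
    and xs_length: "length xs = n" and ys_length: "length ys = Suc (Suc n)"
begin

private abbreviation (input) "i \<equiv> first_crossing n xs ys"

private lemma crossing_swap_eq:
  "crossing_swap n xs ys = (take i xs @ drop (Suc i) ys, take (Suc i) ys @ drop i xs)"
  by (simp add: crossing_swap_def Let_def)

lemma crossing_swap_length:
  "length (fst (crossing_swap n xs ys)) = Suc n" "length (snd (crossing_swap n xs ys)) = Suc n"
  using first_crossing_le[of n xs ys] by (simp_all add: crossing_swap_eq xs_length ys_length)

lemma crossing_swap_sorted:
  "sorted (fst (crossing_swap n xs ys))" "sorted (snd (crossing_swap n xs ys))"
proof -
  have i_le: "i \<le> n" by (rule first_crossing_le)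
  show "sorted (fst (crossing_swap n xs ys))"
    unfolding crossing_swap_eq fst_conv sorted_append
  proof (intro conjI ballI)
    fix u v assume u: "u \<in> set (take i xs)" and v: "v \<in> set (drop (Suc i) ys)"
    then have "0 < i" by (cases i) auto
    have "u \<le> xs ! (i - 1)"
      using u i_le xs_length \<open>0 < i\<close> by (intro sorted_take_le_nth[OF xs_sorted]) auto
    also have "\<dots> < ys ! (i - 1)"
      using \<open>0 < i\<close> by (intro less_first_crossing[of _ n]) simp
    also have "\<dots> \<le> v"
      using v by (intro sorted_nth_le_drop[OF ys_sorted]) auto
    finally show "u \<le> v" by simp
  qed (use xs_sorted ys_sorted in simp_all)
  show "sorted (snd (crossing_swap n xs ys))"
    unfolding crossing_swap_eq snd_conv sorted_append
  proof (intro conjI ballI)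
    fix u v assume u: "u \<in> set (take (Suc i) ys)" and v: "v \<in> set (drop i xs)"
    then have "i < n" using xs_length by (cases "i < n") auto
    have "u \<le> ys ! i"
      using u i_le ys_length by (intro sorted_take_le_nth[OF ys_sorted]) auto
    also have "\<dots> \<le> xs ! i"
      using \<open>i < n\<close> by (rule first_crossing_crosses)
    also have "\<dots> \<le> v"
      using v by (intro sorted_nth_le_drop[OF xs_sorted]) auto
    finally show "u \<le> v" .
  qed (use xs_sorted ys_sorted in simp_all)
qed

lemma crossing_swap_involutive: "case_prod (crossing_swap n) (crossing_swap n xs ys) = (xs, ys)"
proof -
  define c d where "c = fst (crossing_swap n xs ys)" and "d = snd (crossing_swap n xs ys)"
  have i_le: "i \<le> n" by (rule first_crossing_le)
  have cd: "c = take i xs @ drop (Suc i) ys" "d = take (Suc i) ys @ drop i xs"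
    by (simp_all add: c_def d_def crossing_swap_eq)
  have "first_crossing n c d = i"
  proof (rule first_crossing_eqI[OF i_le])
    show "c ! j < d ! j" if "j < i" for j
      using that i_le less_first_crossing[OF that] xs_length ys_length
      by (simp add: cd nth_append)
    show "d ! i \<le> c ! i" if "i < n"
      using that xs_length ys_length sorted_nth_mono[OF ys_sorted, of i "Suc i"]
      by (simp add: cd nth_append)
  qed
  then show ?thesis
    using i_le xs_length ys_length
    by (simp add: c_def[symmetric] d_def[symmetric] crossing_swap_def cd Let_def min_def)
qed

end

section \<open>Rebalancing pairs of multisets\<close>

definition rebalance ::
    "nat \<Rightarrow> 'a::linorder multiset \<times> 'a multiset \<Rightarrow> 'a multiset \<times> 'a multiset" where
  "rebalance n = (\<lambda>(A, B).
     map_prod mset mset (crossing_swap n (sorted_list_of_multiset A) (sorted_list_of_multiset B)))"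

context
  fixes A B :: "'a::linorder multiset" and n :: nat
  assumes A_size: "size A = n" and B_size: "size B = Suc (Suc n)"
begin

private lemma sorted_lists_of_sizes:
  "sorted (sorted_list_of_multiset A)" "sorted (sorted_list_of_multiset B)"
  "length (sorted_list_of_multiset A) = n" "length (sorted_list_of_multiset B) = Suc (Suc n)"
  using A_size B_size by (simp_all flip: size_mset)

lemma rebalance_size:
  "size (fst (rebalance n (A, B))) = Suc n" "size (snd (rebalance n (A, B))) = Suc n"
  using crossing_swap_length[OF sorted_lists_of_sizes] by (simp_all add: rebalance_def)

lemma rebalance_sum: "fst (rebalance n (A, B)) + snd (rebalance n (A, B)) = A + B"
  using crossing_swap_mset[of n "sorted_list_of_multiset A" "sorted_list_of_multiset B"]
  by (simp add: rebalance_def)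

lemma rebalance_rebalance: "rebalance n (rebalance n (A, B)) = (A, B)"
proof -
  obtain c d
    where cd: "crossing_swap n (sorted_list_of_multiset A) (sorted_list_of_multiset B) = (c, d)"
    by fastforce
  have "sorted c" "sorted d"
    using crossing_swap_sorted[OF sorted_lists_of_sizes] by (simp_all add: cd)
  then have "sorted_list_of_multiset (mset c) = c" "sorted_list_of_multiset (mset d) = d"
    by (simp_all add: sorted_list_of_multiset_mset sorted_sort_id)
  then show ?thesis
    using crossing_swap_involutive[OF sorted_lists_of_sizes]
    by (simp add: rebalance_def cd)
qed

end

text \<open>Pairs, and hence the one-particle states, are ordered componentwise, not linearly; the
  sorting is therefore done on the image under an injection into a linear order.\<close>

definition rebalance_along ::
    "('a \<Rightarrow> 'b::linorder) \<Rightarrow> nat \<Rightarrow> 'a multiset \<times> 'a multiset \<Rightarrow> 'a multiset \<times> 'a multiset" where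
  "rebalance_along e n = map_prod (image_mset (inv e)) (image_mset (inv e)) \<circ> rebalance n \<circ>
     map_prod (image_mset e) (image_mset e)"

context
  fixes e :: "'a \<Rightarrow> 'b::linorder" and A B :: "'a multiset" and n :: nat
  assumes e_inj: "inj e" and A_size: "size A = n" and B_size: "size B = Suc (Suc n)"
begin

private abbreviation (input) "R \<equiv> rebalance n (image_mset e A, image_mset e B)"

private lemma rebalance_encoded:
  "size (fst R) = Suc n" "size (snd R) = Suc n" "fst R + snd R = image_mset e (A + B)"
  using rebalance_size[of "image_mset e A" n "image_mset e B"]
    rebalance_sum[of "image_mset e A" n "image_mset e B"] A_size B_size
  by simp_all

private lemma encode_decode: "M \<subseteq># fst R + snd R \<Longrightarrow> image_mset e (image_mset (inv e) M) = M"
proof -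
  assume "M \<subseteq># fst R + snd R"
  then have "set_mset M \<subseteq> range e"
    using set_mset_mono rebalance_encoded(3) by fastforce
  then have "image_mset (e \<circ> inv e) M = image_mset id M"
    by (intro image_mset_cong) (auto intro: f_inv_into_f)
  then show ?thesis
    by (simp add: multiset.map_comp)
qed

lemma rebalance_along_size:
  "size (fst (rebalance_along e n (A, B))) = Suc n"
  "size (snd (rebalance_along e n (A, B))) = Suc n"
  using rebalance_encoded by (simp_all add: rebalance_along_def case_prod_unfold)

lemma rebalance_along_sum:
  "fst (rebalance_along e n (A, B)) + snd (rebalance_along e n (A, B)) = A + B"
proof -
  have "fst (rebalance_along e n (A, B)) + snd (rebalance_along e n (A, B))
      = image_mset (inv e) (fst R + snd R)"
    by (simp add: rebalance_along_def case_prod_unfold)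
  also have "\<dots> = A + B"
    using e_inj by (simp add: rebalance_encoded(3) multiset.map_comp o_def)
  finally show ?thesis .
qed

lemma rebalance_along_rebalance_along: "rebalance_along e n (rebalance_along e n (A, B)) = (A, B)"
proof -
  have "map_prod (image_mset e) (image_mset e) (rebalance_along e n (A, B)) = R"
    using encode_decode by (simp add: rebalance_along_def map_prod_def case_prod_unfold)
  then have "rebalance_along e n (rebalance_along e n (A, B))
      = map_prod (image_mset (inv e)) (image_mset (inv e)) (rebalance n R)"
    by (simp add: rebalance_along_def)
  also have "\<dots> = (A, B)"
    using e_inj A_size B_size
    by (simp add: rebalance_rebalance multiset.map_comp o_def)
  finally show ?thesis .
qed

end

definition msets_on :: "'a set \<Rightarrow> nat \<Rightarrow> 'a multiset set" where
  "msets_on S k = {M. size M = k \<and> set_mset M \<subseteq> S}"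

lemma inj_on_rebalance_along:
  assumes "inj e"
  shows "inj_on (rebalance_along e n) (msets_on S n \<times> msets_on S (Suc (Suc n)))"
proof (rule inj_on_inverseI)
  fix p assume "p \<in> msets_on S n \<times> msets_on S (Suc (Suc n))"
  then show "rebalance_along e n (rebalance_along e n p) = p"
    using rebalance_along_rebalance_along[OF \<open>inj e\<close>] by (auto simp: msets_on_def)
qed

lemma rebalance_along_in_msets_on:
  assumes "inj e" and "p \<in> msets_on S n \<times> msets_on S (Suc (Suc n))"
  shows "rebalance_along e n p \<in> msets_on S (Suc n) \<times> msets_on S (Suc n)"
proof -
  obtain A B where AB: "p = (A, B)" "size A = n" "size B = Suc (Suc n)" "set_mset (A + B) \<subseteq> S"
    using assms(2) by (auto simp: msets_on_def)
  obtain C D where CD: "rebalance_along e n (A, B) = (C, D)"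
    by fastforce
  have "C + D = A + B" "size C = Suc n" "size D = Suc n"
    using rebalance_along_sum[OF \<open>inj e\<close> AB(2,3)] rebalance_along_size[OF \<open>inj e\<close> AB(2,3)]
    by (simp_all add: CD)
  moreover from this(1) have "set_mset C \<subseteq> S" "set_mset D \<subseteq> S"
    using AB(4) by (metis le_sup_iff set_mset_union)+
  ultimately show ?thesis
    by (simp add: AB(1) CD msets_on_def)
qed

lemma has_sum_product_nonneg:
  fixes f g :: "_ \<Rightarrow> real"
  assumes f: "(f has_sum a) A" and g: "(g has_sum b) B"
    and f_nonneg: "\<And>x. x \<in> A \<Longrightarrow> 0 \<le> f x" and g_nonneg: "\<And>y. y \<in> B \<Longrightarrow> 0 \<le> g y"
  shows "((\<lambda>(x, y). f x * g y) has_sum a * b) (A \<times> B)"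
proof -
  have rows: "((\<lambda>y. f x * g y) has_sum f x * b) B" for x
    by (rule has_sum_cmult_right[OF g])
  have "(\<lambda>x. f x * b) summable_on A"
    using f by (intro summable_on_cmult_left) (auto dest: has_sum_imp_summable)
  then have summable: "(\<lambda>(x, y). f x * g y) summable_on A \<times> B"
    using rows by (intro summable_on_SigmaI[where g = "\<lambda>x. f x * b"])
      (auto intro!: mult_nonneg_nonneg f_nonneg g_nonneg)
  have "infsum (\<lambda>(x, y). f x * g y) (A \<times> B) = (\<Sum>\<^sub>\<infinity>x\<in>A. \<Sum>\<^sub>\<infinity>y\<in>B. f x * g y)"
    using infsum_Sigma'_banach[of "\<lambda>x y. f x * g y" A "\<lambda>_. B"] summable by simp
  also have "\<dots> = (\<Sum>\<^sub>\<infinity>x\<in>A. f x * b)"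
    using rows by (intro infsum_cong) (simp add: infsumI)
  also have "\<dots> = a * b"
    using has_sum_cmult_left[OF f] by (simp add: infsumI)
  finally show ?thesis
    using summable by (simp add: has_sum_iff)
qed

lemma has_sum_sum:
  fixes f :: "'i \<Rightarrow> 'a \<Rightarrow> 'b::topological_comm_monoid_add"
  assumes "finite I" "\<And>i. i \<in> I \<Longrightarrow> (f i has_sum s i) A"
  shows "((\<lambda>x. \<Sum>i\<in>I. f i x) has_sum (\<Sum>i\<in>I. s i)) A"
  using assms by (induction I rule: finite_induct) (auto intro: has_sum_add)

lemma summable_on_exp_neg_square:
  fixes t :: real
  assumes "t > 0"
  shows "(\<lambda>n::nat. exp (- t * real n ^ 2)) summable_on UNIV"
proof (rule summable_on_comparison_test)
  show "(\<lambda>n::nat. exp (- t) ^ n) summable_on UNIV"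
    using assms by (intro summable_nonneg_imp_summable_on summable_geometric) auto
  show "exp (- t * real n ^ 2) \<le> exp (- t) ^ n" for n :: nat
  proof -
    have "real n \<le> real n ^ 2" by (cases n) (auto simp: power2_eq_square)
    then have "- t * real n ^ 2 \<le> - t * real n" using assms by simp
    then show ?thesis by (simp add: exp_of_nat_mult[symmetric] mult.commute)
  qed
qed simp

lemma sum_increments_upto:
  fixes f :: "nat \<Rightarrow> 'a::ab_group_add"
  shows "(\<Sum>j = 1..m. if j \<le> c then f j - f (j - 1) else 0) = f (min m c) - f 0"
proof (induction m)
  case (Suc m)
  have "{1..Suc m} = insert (Suc m) {1..m}" by auto
  then show ?case using Suc by (auto simp: min_def)
qed simp

lemma log_concave_ratio_mono:
  fixes Z :: "nat \<Rightarrow> real"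
  assumes pos: "\<And>n. Z n > 0" and log_concave: "\<And>n. Z n * Z (Suc (Suc n)) \<le> Z (Suc n) ^ 2"
    and "a \<le> b"
  shows "Z a / Z (a + j) \<le> Z b / Z (b + j)"
proof -
  define r where "r k = Z k / Z (Suc k)" for k
  have "r k \<le> r (Suc k)" for k
    using log_concave[of k] pos[of k] pos[of "Suc k"] pos[of "Suc (Suc k)"]
    by (simp add: r_def divide_simps power2_eq_square)
  then have "incseq r" by (rule incseq_SucI)
  have telescope: "Z c / Z (c + j) = (\<Prod>i<j. r (c + i))" for c
  proof (induction j)
    case (Suc j)
    have "Z c / Z (c + Suc j) = Z c / Z (c + j) * r (c + j)"
      using pos[of "c + j"] by (simp add: r_def)
    then show ?case by (simp add: Suc.IH)
  qed (simp add: less_imp_neq[OF pos, symmetric])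
  show ?thesis
    unfolding telescope
  proof (rule prod_mono)
    fix i show "0 \<le> r (a + i) \<and> r (a + i) \<le> r (b + i)"
      using pos \<open>incseq r\<close> \<open>a \<le> b\<close> by (simp add: r_def less_imp_le incseq_def)
  qed
qed

section \<open>Canonical expectations of occupation numbers\<close>

lemma cexp_uminus: "cexp beta V a1 a2 a3 (\<lambda>j. - f j) q n = - cexp beta V a1 a2 a3 f q n"
  unfolding cexp_def by (simp add: infsum_uminus)

locale perfect_bose_gas =
  fixes beta V a1 a2 a3 :: real
  assumes beta_pos: "beta > 0" and V_pos: "V > 0"
begin

abbreviation W :: "state multiset \<Rightarrow> real" where "W \<equiv> boltz beta V a1 a2 a3"
abbreviation Z :: "nat \<Rightarrow> real" where "Z \<equiv> Zcan beta V a1 a2 a3"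
abbreviation w :: "state \<Rightarrow> real" where "w q \<equiv> exp (- beta * eig V a1 a2 a3 q)"

lemma boltz_add: "W (A + B) = W A * W B"
  unfolding boltz_def by (simp add: algebra_simps flip: exp_add)

lemma boltz_add_mset: "W (add_mset q M) = w q * W M"
  unfolding boltz_def by (simp add: algebra_simps flip: exp_add)

lemma boltz_pos: "W M > 0"
  unfolding boltz_def by simp

lemma boltz_replicate: "W (replicate_mset j q) = w q ^ j"
  by (induction j) (simp_all add: boltz_add_mset, simp add: boltz_def)

lemma one_particle_weight_summable: "w summable_on states"
proof -
  define g where "g t = (\<lambda>n::nat. exp (- (beta * (pi\<^sup>2 / 2) * V powr (-2 * t)) * real n ^ 2))" for t
  have g: "(g t has_sum infsum (g t) UNIV) UNIV" for t
    unfolding g_def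
    by (intro has_sum_infsum summable_on_exp_neg_square) (use beta_pos V_pos in auto)
  have "((\<lambda>(x, y, z). g a1 x * (g a2 y * g a3 z)) has_sum
      infsum (g a1) UNIV * (infsum (g a2) UNIV * infsum (g a3) UNIV)) (UNIV \<times> UNIV \<times> UNIV)"
    using has_sum_product_nonneg[OF g has_sum_product_nonneg[OF g g]]
    by (simp add: g_def case_prod_unfold)
  moreover have "w q = (\<lambda>(x, y, z). g a1 x * (g a2 y * g a3 z)) q" for q
    by (cases q) (simp add: eig_def g_def algebra_simps flip: exp_add)
  ultimately have "w summable_on UNIV"
    by (simp add: has_sum_imp_summable)
  then show ?thesis
    by (rule summable_on_subset) simp
qed

lemma configs_eq_msets_on: "configs n = msets_on states n"
  by (simp add: configs_def msets_on_def)

lemma boltz_summable: "W summable_on configs n"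
proof (induction n)
  case 0
  have "configs 0 = {{#}}" by (auto simp: configs_def)
  then show ?case by simp
next
  case (Suc n)
  define pick where "pick M = (SOME q. q \<in># M)" for M :: "state multiset"
  define split where "split M = (pick M, M - {#pick M#})" for M
  have pick: "pick M \<in># M" if "M \<in> configs (Suc n)" for M
  proof -
    have "M \<noteq> {#}" using that by (auto simp: configs_def)
    then show ?thesis unfolding pick_def by (metis multiset_nonemptyE someI)
  qed
  then have add_split: "M = add_mset (fst (split M)) (snd (split M))" if "M \<in> configs (Suc n)" for M
    using that by (simp add: split_def)
  then have inj: "inj_on split (configs (Suc n))"
    by (intro inj_onI) metis
  have image: "split ` configs (Suc n) \<subseteq> states \<times> configs n"
  proof (rule image_subsetI)
    fix M assume "M \<in> configs (Suc n)"
    with pick[OF this] show "split M \<in> states \<times> configs n"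
      by (auto simp: split_def configs_def size_Diff_singleton dest: in_diffD)
  qed
  have "(\<lambda>(q, M). w q * W M) summable_on states \<times> configs n"
    using has_sum_product_nonneg[OF has_sum_infsum[OF one_particle_weight_summable]
        has_sum_infsum[OF Suc.IH]]
    by (auto simp: less_imp_le[OF boltz_pos] dest: has_sum_imp_summable)
  then have "(\<lambda>(q, M). w q * W M) summable_on split ` configs (Suc n)"
    using image by (rule summable_on_subset)
  then have "((\<lambda>(q, M). w q * W M) \<circ> split) summable_on configs (Suc n)"
    using summable_on_reindex[OF inj] by blast
  moreover have "((\<lambda>(q, M). w q * W M) \<circ> split) M = W M" if "M \<in> configs (Suc n)" for M
    by (subst (2) add_split[OF that]) (simp add: boltz_add_mset case_prod_beta)
  ultimately show ?case
    using summable_on_cong by (metis (no_types, lifting))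
qed

lemma Zcan_pos: "Z n > 0"
proof -
  have "replicate_mset n (1, 1, 1) \<in> configs n"
    by (simp add: configs_def states_def)
  then have "W (replicate_mset n (1, 1, 1)) \<le> Z n"
    unfolding Zcan_def
    using finite_sum_le_infsum[OF boltz_summable, of "{replicate_mset n (1, 1, 1)}"]
    by (simp add: less_imp_le[OF boltz_pos])
  then show ?thesis
    using boltz_pos by (rule less_le_trans[rotated])
qed

lemma infsum_boltz_occupation_ge:
  assumes q: "q \<in> states" and "j \<le> n"
  shows "infsum W {M \<in> configs n. j \<le> count M q} = w q ^ j * Z (n - j)"
proof -
  define add_q where "add_q A = A + replicate_mset j q" for A
  have "inj_on add_q (configs (n - j))"
    unfolding add_q_def by (rule inj_onI) simp
  moreover have "add_q ` configs (n - j) = {M \<in> configs n. j \<le> count M q}"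
  proof (intro set_eqI iffI)
    fix M assume "M \<in> add_q ` configs (n - j)"
    then obtain A where "A \<in> configs (n - j)" "M = A + replicate_mset j q"
      by (auto simp: add_q_def)
    moreover have "set_mset (replicate_mset j q) \<subseteq> states"
      using q by simp
    ultimately show "M \<in> {M \<in> configs n. j \<le> count M q}"
      using \<open>j \<le> n\<close> by (auto simp: configs_def)
  next
    fix M assume M: "M \<in> {M \<in> configs n. j \<le> count M q}"
    then have sub: "replicate_mset j q \<subseteq># M"
      by (simp add: subseteq_mset_def)
    then have "M - replicate_mset j q \<in> configs (n - j)"
      using M by (auto simp: configs_def size_Diff_submset dest: in_diffD)
    moreover have "M = add_q (M - replicate_mset j q)"
      using sub by (simp add: add_q_def)
    ultimately show "M \<in> add_q ` configs (n - j)" by blast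
  qed
  ultimately have "infsum W {M \<in> configs n. j \<le> count M q} = infsum (W \<circ> add_q) (configs (n - j))"
    by (metis infsum_reindex)
  also have "\<dots> = infsum (\<lambda>A. w q ^ j * W A) (configs (n - j))"
    by (simp add: add_q_def boltz_add boltz_replicate o_def mult.commute)
  also have "\<dots> = w q ^ j * Z (n - j)"
    by (simp add: Zcan_def infsum_cmult_right[OF boltz_summable])
  finally show ?thesis .
qed

lemma Zcan_log_concave: "Z n * Z (Suc (Suc n)) \<le> Z (Suc n) ^ 2"
proof -
  define h where "h = (\<lambda>(C, D). W C * W D)"
  have h_has_sum: "(h has_sum Z k * Z l) (configs k \<times> configs l)" for k l
    unfolding h_def Zcan_def
    by (intro has_sum_product_nonneg has_sum_infsum boltz_summable)
      (simp_all add: less_imp_le[OF boltz_pos])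
  have h_nonneg: "h p \<ge> 0" for p
    by (simp add: h_def case_prod_unfold less_imp_le[OF boltz_pos])
  define D where "D = configs n \<times> configs (Suc (Suc n))"
  define G :: "state multiset \<times> state multiset \<Rightarrow> state multiset \<times> state multiset"
    where "G = rebalance_along to_nat n"
  have G_inj: "inj_on G D" and G_image: "G ` D \<subseteq> configs (Suc n) \<times> configs (Suc n)"
    using inj_on_rebalance_along rebalance_along_in_msets_on
    by (fastforce simp: G_def D_def configs_eq_msets_on)+
  have h_G: "(h \<circ> G) p = h p" if "p \<in> D" for p
    using that rebalance_along_sum[of to_nat "fst p" n "snd p"]
    by (auto simp: G_def D_def configs_def h_def case_prod_unfold simp flip: boltz_add)
  have "Z n * Z (Suc (Suc n)) = infsum h D"
    unfolding D_def by (rule infsumI[OF h_has_sum, symmetric])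
  also have "\<dots> = infsum (h \<circ> G) D"
    using h_G by (intro infsum_cong) simp
  also have "\<dots> = infsum h (G ` D)"
    by (rule infsum_reindex[OF G_inj, symmetric])
  also have "\<dots> \<le> infsum h (configs (Suc n) \<times> configs (Suc n))"
  proof (rule infsum_mono2)
    show "h summable_on configs (Suc n) \<times> configs (Suc n)"
      using h_has_sum by (rule has_sum_imp_summable)
    show "G ` D \<subseteq> configs (Suc n) \<times> configs (Suc n)"
      by (rule G_image)
    then show "h summable_on G ` D"
      using \<open>h summable_on configs (Suc n) \<times> configs (Suc n)\<close> summable_on_subset_banach by blast
  qed (rule h_nonneg)
  also have "\<dots> = Z (Suc n) ^ 2"
    unfolding power2_eq_square by (rule infsumI[OF h_has_sum])
  finally show ?thesis .
qed

definition prob_occ_ge :: "state \<Rightarrow> nat \<Rightarrow> nat \<Rightarrow> real" where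
  "prob_occ_ge q j n = infsum W {M \<in> configs n. j \<le> count M q} / Z n"

lemma prob_occ_ge_mono:
  assumes q: "q \<in> states" and "n \<le> m"
  shows "prob_occ_ge q j n \<le> prob_occ_ge q j m"
proof (cases "j \<le> n")
  case False
  have "\<not> j \<le> count M q" if "M \<in> configs n" for M
    using that count_le_size[of M q] False by (simp add: configs_def)
  then have empty: "{M \<in> configs n. j \<le> count M q} = {}"
    by blast
  have "prob_occ_ge q j n = 0"
    unfolding prob_occ_ge_def empty by simp
  moreover have "prob_occ_ge q j m \<ge> 0"
    unfolding prob_occ_ge_def using Zcan_pos[of m]
    by (intro divide_nonneg_pos infsum_nonneg) (simp_all add: less_imp_le[OF boltz_pos])
  ultimately show ?thesis by simp
next
  case True
  have eq: "prob_occ_ge q j k = w q ^ j * (Z (k - j) / Z (k - j + j))" if "j \<le> k" for k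
    using that by (simp add: prob_occ_ge_def infsum_boltz_occupation_ge[OF q that])
  have "Z (n - j) / Z (n - j + j) \<le> Z (m - j) / Z (m - j + j)"
    using \<open>n \<le> m\<close> by (intro log_concave_ratio_mono Zcan_pos Zcan_log_concave) simp
  then have "w q ^ j * (Z (n - j) / Z (n - j + j)) \<le> w q ^ j * (Z (m - j) / Z (m - j + j))"
    by (rule mult_left_mono) simp
  then show ?thesis
    using True \<open>n \<le> m\<close> by (simp only: eq)
qed

lemma cexp_eq_sum_increments:
  assumes "n \<le> m"
  shows "cexp beta V a1 a2 a3 f q n = f 0 + (\<Sum>j = 1..m. (f j - f (j - 1)) * prob_occ_ge q j n)"
proof -
  define T where "T j = infsum W {M \<in> configs n. j \<le> count M q}" for j
  define ind where "ind j M = (if j \<le> count M q then W M else 0)" for j M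
  have ind: "(ind j has_sum T j) (configs n)" for j
  proof -
    have "W summable_on {M \<in> configs n. j \<le> count M q}"
      using boltz_summable by (rule summable_on_subset_banach) auto
    then have "(W has_sum T j) {M \<in> configs n. j \<le> count M q}"
      unfolding T_def by (rule has_sum_infsum)
    then show ?thesis
      by (rule has_sum_cong_neutral[THEN iffD1, rotated 3]) (auto simp: ind_def)
  qed
  have pointwise: "f (count M q) * W M = f 0 * W M + (\<Sum>j = 1..m. (f j - f (j - 1)) * ind j M)"
    if "M \<in> configs n" for M
  proof -
    have "count M q \<le> m"
      using that count_le_size[of M q] \<open>n \<le> m\<close> by (simp add: configs_def)
    then have "f (count M q) = f 0 + (\<Sum>j = 1..m. if j \<le> count M q then f j - f (j - 1) else 0)"
      using sum_increments_upto[where f = f and m = m and c = "count M q"]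
      by (simp add: min_absorb2)
    then have "f (count M q) * W M
        = f 0 * W M + (\<Sum>j = 1..m. (if j \<le> count M q then f j - f (j - 1) else 0) * W M)"
      by (simp add: distrib_right sum_distrib_right)
    also have "\<dots> = f 0 * W M + (\<Sum>j = 1..m. (f j - f (j - 1)) * ind j M)"
      by (intro arg_cong2[where f = "(+)"] sum.cong) (simp_all add: ind_def)
    finally show ?thesis .
  qed
  have "((\<lambda>M. f 0 * W M + (\<Sum>j = 1..m. (f j - f (j - 1)) * ind j M)) has_sum
      f 0 * Z n + (\<Sum>j = 1..m. (f j - f (j - 1)) * T j)) (configs n)"
    unfolding Zcan_def
    by (intro has_sum_add has_sum_cmult_right has_sum_sum has_sum_infsum boltz_summable ind) simp
  then have "((\<lambda>M. f (count M q) * W M) has_sum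
      f 0 * Z n + (\<Sum>j = 1..m. (f j - f (j - 1)) * T j)) (configs n)"
    by (simp add: has_sum_cong[OF pointwise])
  then show ?thesis
    unfolding cexp_def prob_occ_ge_def T_def[symmetric] using Zcan_pos[of n]
    by (simp add: infsumI add_divide_distrib sum_divide_distrib)
qed

lemma cexp_mono:
  assumes "mono f" and q: "q \<in> states" and "n \<le> m"
  shows "cexp beta V a1 a2 a3 f q n \<le> cexp beta V a1 a2 a3 f q m"
proof -
  have "(f j - f (j - 1)) * prob_occ_ge q j n \<le> (f j - f (j - 1)) * prob_occ_ge q j m" for j
    using monoD[OF \<open>mono f\<close>, of "j - 1" j]
    by (intro mult_left_mono prob_occ_ge_mono q \<open>n \<le> m\<close>) simp_all
  then show ?thesis
    using cexp_eq_sum_increments[OF \<open>n \<le> m\<close>] cexp_eq_sum_increments[OF order_refl]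
    by (simp add: sum_mono)
qed

lemma cexp_antimono:
  assumes "antimono f" and "q \<in> states" and "n \<le> m"
  shows "cexp beta V a1 a2 a3 f q m \<le> cexp beta V a1 a2 a3 f q n"
proof -
  have "mono (\<lambda>j. - f j)"
    using \<open>antimono f\<close> by (simp add: antimono_def mono_def)
  from cexp_mono[OF this assms(2,3)] show ?thesis
    by (simp add: cexp_uminus)
qed

end

theorem theorem3p1:
  fixes V beta a1 a2 a3 :: real and e :: "nat \<Rightarrow> state" and k :: nat
  assumes "a1 \<ge> a2" "a2 \<ge> a3" "a3 > 0" "a1 + a2 + a3 = 1"
    and "V > 0" and "beta > 0"
    and "eig_enum V a1 a2 a3 e" and "k \<ge> 1"
  shows "(\<forall>lam::real. lam > 0 \<longrightarrow> (\<forall>n m :: nat. real n / V \<le> real m / V \<longrightarrow>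
            cexp beta V a1 a2 a3 (\<lambda>j. exp (- lam * real j)) (e k) m
              \<le> cexp beta V a1 a2 a3 (\<lambda>j. exp (- lam * real j)) (e k) n))
       \<and> (\<forall>r::nat. r \<ge> 1 \<longrightarrow> (\<forall>n m :: nat. real n / V \<le> real m / V \<longrightarrow>
            cexp beta V a1 a2 a3 (\<lambda>j. real j ^ r) (e k) n
              \<le> cexp beta V a1 a2 a3 (\<lambda>j. real j ^ r) (e k) m))"
proof -
  interpret perfect_bose_gas beta V a1 a2 a3
    using \<open>V > 0\<close> \<open>beta > 0\<close> by unfold_locales
  have q: "e k \<in> states"
    using assms(7,8) by (auto simp: eig_enum_def dest: bij_betw_apply)
  have le: "n \<le> m" if "real n / V \<le> real m / V" for n m :: nat
    using that \<open>V > 0\<close> by (simp add: divide_le_cancel)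
  have "antimono (\<lambda>j. exp (- lam * real j))" if "lam > 0" for lam :: real
    using that by (intro antimonoI) simp
  moreover have "mono (\<lambda>j. real j ^ r)" for r
    by (intro monoI power_mono) simp_all
  ultimately show ?thesis
    using cexp_antimono[OF _ q le] cexp_mono[OF _ q le] by blast
qed

end
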